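(* If $(\Phi,D)$ is a labeled continuous information algebra, then its associated domain-free information algebra $(\Phi/\sigma,D)$ is a domain-free continuous information algebra.
   Context: A labeled information algebra $(\Phi,D)$ consists of a lattice $D$, a set $\Phi$ with labeling $d:\Phi\to D$, combination $\otimes$ and marginalization $\phi^{\downarrow x}$ for $x\le d(\phi)$, such that: $\otimes$ is associative and commutative; for each $s\in D$ there is $e_s$ with $d(e_s)=s$ and $e_s\otimes\phi=\phi$ whenever $d(\phi)=s$; $d(\phi\otimes\psi)=d(\phi)\vee d(\psi)$; $d(\phi^{\downarrow x})=x$; $(\phi^{\downarrow y})^{\downarrow x}=\phi^{\downarrow x}$ for $x\le y\le d(\phi)$; $(\phi\otimes\psi)^{\downarrow x}=\phi\otimes\psi^{\downarrow x\wedge y}$ when $d(\phi)=x$, $d(\psi)=y$; $e_y^{\downarrow x}=e_x$ for $x\le y$; $\phi\otimes\phi^{\downarrow x}=\phi$. In any (labeled or domain-free) information algebra, $\psi\le\phi$ iff $\psi\otimes\phi=\phi$; suprema refer to this order; $a\ll b$ means: for every directed $X$ with $b\le\vee X$ there is $c\in X$ with $a\le c$. $\Phi_x=\{\phi:d(\phi)=x\}$ and $\ll_x$ is the way-below relation in $(\Phi_x,\le)$. $(\Phi,D)$ is labeled continuous if $D$ has a top element and there are sets $\Gamma_x\subseteq\Phi_x$ ($x\in D$), closed under combination and containing $e_x$, such that every directed $X\subseteq\Gamma_x$ has a supremum $\vee X\in\Phi_x$, and $\phi=\vee\{\psi\in\Gamma_x:\psi\ll_x\phi\}$ for all $\phi\in\Phi_x$.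 The associated domain-free algebra: for $y\ge d(\phi)$ let $\phi^{\uparrow y}=\phi\otimes e_y$; define $\phi\equiv\psi\pmod\sigma$ iff $\phi^{\uparrow d(\phi)\vee d(\psi)}=\psi^{\uparrow d(\phi)\vee d(\psi)}$; on $\Phi/\sigma$ set $[\phi]_\sigma\otimes[\psi]_\sigma=[\phi\otimes\psi]_\sigma$ and $[\phi]_\sigma^{\Rightarrow x}=[(\phi^{\uparrow x\vee d(\phi)})^{\downarrow x}]_\sigma$. A domain-free information algebra (a set with associative commutative combination with neutral element $e$ and focusing $\Rightarrow$ satisfying transitivity, combination, support and idempotency axioms) $(\Phi',D)$, with $D$ having a top element, is continuous if there exists $\Gamma\subseteq\Phi'$, closed under combination and containing $e$, such that every directed subset of $\Gamma$ has a supremum in $\Phi'$ and $\phi=\vee\{\psi\in\Gamma:\psi\ll\phi\}$ for all $\phi\in\Phi'$. *)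

theory Defs
  imports Main
begin

definition info_le :: "('a \<Rightarrow> 'a \<Rightarrow> 'a) \<Rightarrow> 'a \<Rightarrow> 'a \<Rightarrow> bool" where
  "info_le comb a b \<longleftrightarrow> comb a b = b"

definition is_sup_in :: "('a \<Rightarrow> 'a \<Rightarrow> 'a) \<Rightarrow> 'a set \<Rightarrow> 'a set \<Rightarrow> 'a \<Rightarrow> bool" where
  "is_sup_in comb C X s \<longleftrightarrow> s \<in> C \<and> (\<forall>x\<in>X. info_le comb x s) \<and>
     (\<forall>u\<in>C. (\<forall>x\<in>X. info_le comb x u) \<longrightarrow> info_le comb s u)"

definition directed_set :: "('a \<Rightarrow> 'a \<Rightarrow> 'a) \<Rightarrow> 'a set \<Rightarrow> bool" where
  "directed_set comb X \<longleftrightarrow> X \<noteq> {} \<and>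
     (\<forall>a\<in>X. \<forall>b\<in>X. \<exists>c\<in>X. info_le comb a c \<and> info_le comb b c)"

definition way_below_in :: "('a \<Rightarrow> 'a \<Rightarrow> 'a) \<Rightarrow> 'a set \<Rightarrow> 'a \<Rightarrow> 'a \<Rightarrow> bool" where
  "way_below_in comb C a b \<longleftrightarrow>
     (\<forall>X s. X \<subseteq> C \<longrightarrow> directed_set comb X \<longrightarrow> is_sup_in comb C X s \<longrightarrow>
        info_le comb b s \<longrightarrow> (\<exists>c\<in>X. info_le comb a c))"

text \<open>Phi is the type 'phi, D is the lattice type 'd; d is the labeling, comb the combination,
  marg phi x the marginal of phi to x (meaningful for x \<le> d phi), e s the neutral element of Phi_s.\<close>
definition labeled_info_algebra ::
  "('phi \<Rightarrow> 'd::lattice) \<Rightarrow> ('phi \<Rightarrow> 'phi \<Rightarrow> 'phi) \<Rightarrow> ('phi \<Rightarrow> 'd \<Rightarrow> 'phi) \<Rightarrow> ('d \<Rightarrow> 'phi) \<Rightarrow> bool" where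
  "labeled_info_algebra d comb marg e \<longleftrightarrow>
     (\<forall>a b c. comb (comb a b) c = comb a (comb b c)) \<and>
     (\<forall>a b. comb a b = comb b a) \<and>
     (\<forall>s. d (e s) = s \<and> (\<forall>phi. d phi = s \<longrightarrow> comb (e s) phi = phi)) \<and>
     (\<forall>phi psi. d (comb phi psi) = sup (d phi) (d psi)) \<and>
     (\<forall>phi x. x \<le> d phi \<longrightarrow> d (marg phi x) = x) \<and>
     (\<forall>phi x y. x \<le> y \<and> y \<le> d phi \<longrightarrow> marg (marg phi y) x = marg phi x) \<and>
     (\<forall>phi psi x y. d phi = x \<and> d psi = y \<longrightarrow>
        marg (comb phi psi) x = comb phi (marg psi (inf x y))) \<and>
     (\<forall>x y. x \<le> y \<longrightarrow> marg (e y) x = e x) \<and>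
     (\<forall>phi x. x \<le> d phi \<longrightarrow> comb phi (marg phi x) = phi)"

definition label_set :: "('phi \<Rightarrow> 'd) \<Rightarrow> 'd \<Rightarrow> 'phi set" where
  "label_set d x = {phi. d phi = x}"

definition labeled_continuous ::
  "('phi \<Rightarrow> 'd::lattice) \<Rightarrow> ('phi \<Rightarrow> 'phi \<Rightarrow> 'phi) \<Rightarrow> ('phi \<Rightarrow> 'd \<Rightarrow> 'phi) \<Rightarrow> ('d \<Rightarrow> 'phi) \<Rightarrow> bool" where
  "labeled_continuous d comb marg e \<longleftrightarrow>
     labeled_info_algebra d comb marg e \<and>
     (\<exists>t::'d. \<forall>x. x \<le> t) \<and>
     (\<exists>\<Gamma> :: 'd \<Rightarrow> 'phi set. \<forall>x.
        \<Gamma> x \<subseteq> label_set d x \<and>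
        (\<forall>a\<in>\<Gamma> x. \<forall>b\<in>\<Gamma> x. comb a b \<in> \<Gamma> x) \<and>
        e x \<in> \<Gamma> x \<and>
        (\<forall>X. X \<subseteq> \<Gamma> x \<longrightarrow> directed_set comb X \<longrightarrow>
              (\<exists>s. is_sup_in comb (label_set d x) X s)) \<and>
        (\<forall>phi\<in>label_set d x.
           is_sup_in comb (label_set d x)
             {psi \<in> \<Gamma> x. way_below_in comb (label_set d x) psi phi} phi))"

definition domain_free_info_algebra ::
  "'a set \<Rightarrow> ('a \<Rightarrow> 'a \<Rightarrow> 'a) \<Rightarrow> ('a \<Rightarrow> 'd::lattice \<Rightarrow> 'a) \<Rightarrow> 'a \<Rightarrow> bool" where
  "domain_free_info_algebra C comb focus n \<longleftrightarrow>
     (\<forall>a\<in>C. \<forall>b\<in>C. comb a b \<in> C) \<and>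
     (\<forall>a\<in>C. \<forall>x. focus a x \<in> C) \<and>
     n \<in> C \<and>
     (\<forall>a\<in>C. \<forall>b\<in>C. \<forall>c\<in>C. comb (comb a b) c = comb a (comb b c)) \<and>
     (\<forall>a\<in>C. \<forall>b\<in>C. comb a b = comb b a) \<and>
     (\<forall>a\<in>C. comb n a = a) \<and>
     (\<forall>a\<in>C. \<forall>x y. focus (focus a x) y = focus a (inf x y)) \<and>
     (\<forall>a\<in>C. \<forall>b\<in>C. \<forall>x. focus (comb (focus a x) b) x = comb (focus a x) (focus b x)) \<and>
     (\<forall>a\<in>C. \<exists>x. focus a x = a) \<and>
     (\<forall>a\<in>C. \<forall>x. comb a (focus a x) = a)"

definition domain_free_continuous ::
  "'a set \<Rightarrow> ('a \<Rightarrow> 'a \<Rightarrow> 'a) \<Rightarrow> ('a \<Rightarrow> 'd::lattice \<Rightarrow> 'a) \<Rightarrow> 'a \<Rightarrow> bool" where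
  "domain_free_continuous C comb focus n \<longleftrightarrow>
     domain_free_info_algebra C comb focus n \<and>
     (\<exists>t::'d. \<forall>x. x \<le> t) \<and>
     (\<exists>\<Gamma>. \<Gamma> \<subseteq> C \<and>
        (\<forall>a\<in>\<Gamma>. \<forall>b\<in>\<Gamma>. comb a b \<in> \<Gamma>) \<and>
        n \<in> \<Gamma> \<and>
        (\<forall>X. X \<subseteq> \<Gamma> \<longrightarrow> directed_set comb X \<longrightarrow> (\<exists>s. is_sup_in comb C X s)) \<and>
        (\<forall>a\<in>C. is_sup_in comb C {b \<in> \<Gamma>. way_below_in comb C b a} a))"

definition vac_ext :: "('phi \<Rightarrow> 'phi \<Rightarrow> 'phi) \<Rightarrow> ('d \<Rightarrow> 'phi) \<Rightarrow> 'phi \<Rightarrow> 'd \<Rightarrow> 'phi" where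
  "vac_ext comb e phi y = comb phi (e y)"

definition sigma_rel ::
  "('phi \<Rightarrow> 'd::lattice) \<Rightarrow> ('phi \<Rightarrow> 'phi \<Rightarrow> 'phi) \<Rightarrow> ('d \<Rightarrow> 'phi) \<Rightarrow> ('phi \<times> 'phi) set" where
  "sigma_rel d comb e = {(phi, psi).
     vac_ext comb e phi (sup (d phi) (d psi)) = vac_ext comb e psi (sup (d phi) (d psi))}"

definition sigma_class ::
  "('phi \<Rightarrow> 'd::lattice) \<Rightarrow> ('phi \<Rightarrow> 'phi \<Rightarrow> 'phi) \<Rightarrow> ('d \<Rightarrow> 'phi) \<Rightarrow> 'phi \<Rightarrow> 'phi set" where
  "sigma_class d comb e phi = sigma_rel d comb e `` {phi}"

definition quot_carrier ::
  "('phi \<Rightarrow> 'd::lattice) \<Rightarrow> ('phi \<Rightarrow> 'phi \<Rightarrow> 'phi) \<Rightarrow> ('d \<Rightarrow> 'phi) \<Rightarrow> 'phi set set" where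
  "quot_carrier d comb e = UNIV // sigma_rel d comb e"

definition quot_comb ::
  "('phi \<Rightarrow> 'd::lattice) \<Rightarrow> ('phi \<Rightarrow> 'phi \<Rightarrow> 'phi) \<Rightarrow> ('d \<Rightarrow> 'phi) \<Rightarrow> 'phi set \<Rightarrow> 'phi set \<Rightarrow> 'phi set" where
  "quot_comb d comb e A B =
     sigma_class d comb e (comb (SOME phi. phi \<in> A) (SOME psi. psi \<in> B))"

definition quot_focus ::
  "('phi \<Rightarrow> 'd::lattice) \<Rightarrow> ('phi \<Rightarrow> 'phi \<Rightarrow> 'phi) \<Rightarrow> ('phi \<Rightarrow> 'd \<Rightarrow> 'phi) \<Rightarrow> ('d \<Rightarrow> 'phi)
     \<Rightarrow> 'phi set \<Rightarrow> 'd \<Rightarrow> 'phi set" where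
  "quot_focus d comb marg e A x =
     (let phi = (SOME phi. phi \<in> A) in
      sigma_class d comb e (marg (vac_ext comb e phi (sup x (d phi))) x))"

end

theory Submission
  imports Defs
begin

text \<open>Let t be the top label. Two valuations are \<sigma>-equivalent exactly when their vacuous
  extensions to t coincide, so \<open>\<phi> \<mapsto> [\<phi>]\<^sub>\<sigma>\<close> restricts to a bijection from \<open>\<Phi>\<^sub>t\<close> onto \<open>\<Phi>/\<sigma>\<close>
  which preserves and reflects the information order. Directed suprema and the way-below
  relation are order-theoretic, so the image of the basis \<open>\<Gamma>\<^sub>t\<close> is a basis of \<open>\<Phi>/\<sigma>\<close>.\<close>

locale info_order_iso =
  fixes f :: "'a \<Rightarrow> 'b" and L :: "'a set" and Q :: "'b set"
    and c1 :: "'a \<Rightarrow> 'a \<Rightarrow> 'a" and c2 :: "'b \<Rightarrow> 'b \<Rightarrow> 'b"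
  assumes image_eq: "f ` L = Q"
    and info_le_iff: "a \<in> L \<Longrightarrow> b \<in> L \<Longrightarrow> info_le c2 (f a) (f b) \<longleftrightarrow> info_le c1 a b"
begin

lemma directed_set_image_iff:
  assumes "X \<subseteq> L"
  shows "directed_set c2 (f ` X) \<longleftrightarrow> directed_set c1 X"
proof -
  have "info_le c2 (f a) (f b) \<longleftrightarrow> info_le c1 a b" if "a \<in> X" "b \<in> X" for a b
    using info_le_iff assms that by blast
  then show ?thesis unfolding directed_set_def by (auto 4 4)
qed

lemma is_sup_in_image_iff:
  assumes X: "X \<subseteq> L" and s: "s \<in> L"
  shows "is_sup_in c2 Q (f ` X) (f s) \<longleftrightarrow> is_sup_in c1 L X s"
proof -
  have all_Q: "(\<forall>v\<in>Q. P v) \<longleftrightarrow> (\<forall>w\<in>L. P (f w))" for P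
    using image_eq by blast
  have upper: "(\<forall>v\<in>f ` X. info_le c2 v (f w)) \<longleftrightarrow> (\<forall>x\<in>X. info_le c1 x w)" if "w \<in> L" for w
    using info_le_iff X that by auto
  show ?thesis
    unfolding is_sup_in_def all_Q using upper info_le_iff s image_eq by auto
qed

lemma way_below_in_image_iff:
  assumes a: "a \<in> L" and b: "b \<in> L"
  shows "way_below_in c2 Q (f a) (f b) \<longleftrightarrow> way_below_in c1 L a b"
proof
  assume wb: "way_below_in c2 Q (f a) (f b)"
  show "way_below_in c1 L a b" unfolding way_below_in_def
  proof (intro allI impI)
    fix X s assume X: "X \<subseteq> L" "directed_set c1 X" "is_sup_in c1 L X s" "info_le c1 b s"
    have s: "s \<in> L" using X(3) unfolding is_sup_in_def by blast
    have "f ` X \<subseteq> Q" using X(1) image_eq by blast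
    moreover have "info_le c2 (f b) (f s)" using info_le_iff[OF b s] X(4) by simp
    ultimately obtain c where "c \<in> X" "info_le c2 (f a) (f c)"
      using wb X directed_set_image_iff is_sup_in_image_iff[OF X(1) s]
      unfolding way_below_in_def by blast
    then show "\<exists>c\<in>X. info_le c1 a c" using info_le_iff[OF a] X(1) by blast
  qed
next
  assume wb: "way_below_in c1 L a b"
  show "way_below_in c2 Q (f a) (f b)" unfolding way_below_in_def
  proof (intro allI impI)
    fix Y S assume Y: "Y \<subseteq> Q" "directed_set c2 Y" "is_sup_in c2 Q Y S" "info_le c2 (f b) S"
    define X where "X = L \<inter> f -` Y"
    have X: "X \<subseteq> L" "f ` X = Y" using Y(1) image_eq unfolding X_def by blast+
    have "S \<in> Q" using Y(3) unfolding is_sup_in_def by blast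
    then obtain s where s: "s \<in> L" "S = f s" using image_eq by blast
    have "directed_set c1 X" "is_sup_in c1 L X s" "info_le c1 b s"
      using directed_set_image_iff is_sup_in_image_iff[OF X(1) s(1)] info_le_iff[OF b s(1)] X Y s
      by auto
    then obtain c where "c \<in> X" "info_le c1 a c"
      using wb X(1) unfolding way_below_in_def by blast
    then show "\<exists>c\<in>Y. info_le c2 (f a) c" using info_le_iff[OF a] X by blast
  qed
qed

lemma continuous_basis_image:
  assumes G: "G \<subseteq> L"
    and directed_sup: "\<And>X. X \<subseteq> G \<Longrightarrow> directed_set c1 X \<Longrightarrow> \<exists>s. is_sup_in c1 L X s"
    and approx: "\<And>a. a \<in> L \<Longrightarrow> is_sup_in c1 L {g \<in> G. way_below_in c1 L g a} a"
  shows "\<And>Y. Y \<subseteq> f ` G \<Longrightarrow> directed_set c2 Y \<Longrightarrow> \<exists>S. is_sup_in c2 Q Y S"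
    and "\<And>A. A \<in> Q \<Longrightarrow> is_sup_in c2 Q {h \<in> f ` G. way_below_in c2 Q h A} A"
proof -
  fix Y assume Y: "Y \<subseteq> f ` G" "directed_set c2 Y"
  define X where "X = G \<inter> f -` Y"
  have X: "X \<subseteq> G" "X \<subseteq> L" "f ` X = Y" using Y(1) G unfolding X_def by blast+
  then obtain s where s: "is_sup_in c1 L X s"
    using directed_sup directed_set_image_iff Y(2) by metis
  then have "s \<in> L" unfolding is_sup_in_def by blast
  then show "\<exists>S. is_sup_in c2 Q Y S" using is_sup_in_image_iff X s by blast
next
  fix A assume "A \<in> Q"
  then obtain a where a: "a \<in> L" "A = f a" using image_eq by blast
  let ?approx = "{g \<in> G. way_below_in c1 L g a}"
  have "f ` ?approx = {h \<in> f ` G. way_below_in c2 Q h A}"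
    using way_below_in_image_iff a G by auto
  moreover have "is_sup_in c2 Q (f ` ?approx) A"
    using is_sup_in_image_iff[of ?approx a] approx a G by auto
  ultimately show "is_sup_in c2 Q {h \<in> f ` G. way_below_in c2 Q h A} A" by simp
qed

end

locale labeled_info_algebra_with_top =
  fixes d :: "'phi \<Rightarrow> 'd::lattice" and comb :: "'phi \<Rightarrow> 'phi \<Rightarrow> 'phi"
    and marg :: "'phi \<Rightarrow> 'd \<Rightarrow> 'phi" and e :: "'d \<Rightarrow> 'phi" and t :: 'd
  assumes algebra: "labeled_info_algebra d comb marg e"
    and le_top: "\<And>x. x \<le> t"
begin

lemma comb_assoc: "comb (comb a b) c = comb a (comb b c)"
  using algebra unfolding labeled_info_algebra_def by metis

lemma comb_commute: "comb a b = comb b a"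
  using algebra unfolding labeled_info_algebra_def by metis

lemma comb_left_commute: "comb a (comb b c) = comb b (comb a c)"
  by (metis comb_assoc comb_commute)

lemma label_neutral [simp]: "d (e s) = s"
  using algebra unfolding labeled_info_algebra_def by metis

lemma neutral_comb: "d phi = s \<Longrightarrow> comb (e s) phi = phi"
  using algebra unfolding labeled_info_algebra_def by metis

lemma label_comb [simp]: "d (comb phi psi) = sup (d phi) (d psi)"
  using algebra unfolding labeled_info_algebra_def by metis

lemma label_marg: "x \<le> d phi \<Longrightarrow> d (marg phi x) = x"
  using algebra unfolding labeled_info_algebra_def by metis

lemma marg_marg: "x \<le> y \<Longrightarrow> y \<le> d phi \<Longrightarrow> marg (marg phi y) x = marg phi x"
  using algebra unfolding labeled_info_algebra_def by metis

lemma marg_comb: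
  "d phi = x \<Longrightarrow> d psi = y \<Longrightarrow> marg (comb phi psi) x = comb phi (marg psi (inf x y))"
  using algebra unfolding labeled_info_algebra_def by metis

lemma marg_neutral: "x \<le> y \<Longrightarrow> marg (e y) x = e x"
  using algebra unfolding labeled_info_algebra_def by metis

lemma comb_marg_idem: "x \<le> d phi \<Longrightarrow> comb phi (marg phi x) = phi"
  using algebra unfolding labeled_info_algebra_def by metis

lemma comb_neutral_label: "comb phi (e (d phi)) = phi"
  using neutral_comb comb_commute by metis

lemma comb_neutral_le: "x \<le> y \<Longrightarrow> comb (e x) (e y) = e y"
  using comb_marg_idem[of x "e y"] marg_neutral[of x y] comb_commute by simp

lemma comb_neutral_neutral: "comb (e x) (e y) = e (sup x y)"
proof -
  have "comb (comb (e x) (e y)) (e (sup x y)) = e (sup x y)"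
    by (simp add: comb_assoc comb_neutral_le)
  moreover have "comb (e (sup x y)) (comb (e x) (e y)) = comb (e x) (e y)"
    by (rule neutral_comb) simp
  ultimately show ?thesis using comb_commute by metis
qed

lemma comb_neutral_sup_label: "comb phi (e (sup (d phi) y)) = comb phi (e y)"
  by (metis comb_assoc comb_neutral_neutral comb_neutral_label)

lemma marg_label: "marg phi (d phi) = phi"
  using marg_comb[of phi "d phi" "e (d phi)" "d phi"] marg_neutral[of "d phi" "d phi"]
  by (simp add: comb_neutral_label)

lemma marg_comb_neutral: "d phi = x \<Longrightarrow> marg (comb phi (e y)) y = comb (marg phi (inf x y)) (e y)"
  using marg_comb[of "e y" y phi x] comb_commute by (simp add: inf_commute)

definition ext_top :: "'phi \<Rightarrow> 'phi" where
  "ext_top phi = comb phi (e t)"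

lemma label_ext_top [simp]: "d (ext_top phi) = t"
  unfolding ext_top_def using le_top by (simp add: sup_absorb2)

lemma comb_neutral_top [simp]: "comb (e x) (e t) = e t"
  using comb_neutral_le le_top by blast

lemma ext_top_label_top: "d phi = t \<Longrightarrow> ext_top phi = phi"
  unfolding ext_top_def using comb_neutral_label by metis

lemma ext_top_comb: "ext_top (comb a b) = comb (ext_top a) (ext_top b)"
  unfolding ext_top_def by (metis comb_assoc comb_commute comb_neutral_top)

lemma ext_top_neutral_comb: "ext_top (comb (e x) phi) = ext_top phi"
  unfolding ext_top_def by (metis comb_assoc comb_left_commute comb_neutral_top)

lemma marg_ext_top: "d phi \<le> y \<Longrightarrow> marg (ext_top phi) y = comb phi (e y)"
proof -
  assume y: "d phi \<le> y"
  let ?p = "comb phi (e y)"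
  have label_p: "d ?p = y" using y by (simp add: sup_absorb2)
  have "ext_top phi = comb ?p (e t)" unfolding ext_top_def by (simp add: comb_assoc)
  then have "marg (ext_top phi) y = comb ?p (marg (e t) (inf y t))"
    using marg_comb[OF label_p, of "e t" t] by simp
  also have "\<dots> = comb ?p (e y)" using le_top marg_neutral by (simp add: inf_absorb1)
  also have "\<dots> = ?p" by (simp add: comb_assoc comb_neutral_le)
  finally show ?thesis .
qed

lemma ext_top_marg_ext_top: "ext_top (marg (ext_top phi) y) = ext_top (marg phi (inf (d phi) y))"
proof -
  let ?z = "sup (d phi) y"
  have "marg (ext_top phi) y = marg (marg (ext_top phi) ?z) y"
    using marg_marg[of y ?z "ext_top phi"] le_top by simp
  also have "\<dots> = marg (comb phi (e y)) y"
    using marg_ext_top[of phi ?z] comb_neutral_sup_label by simp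
  also have "\<dots> = comb (marg phi (inf (d phi) y)) (e y)" using marg_comb_neutral by simp
  finally show ?thesis unfolding ext_top_def by (simp add: comb_assoc)
qed

lemma sigma_rel_iff_ext_top: "(phi, psi) \<in> sigma_rel d comb e \<longleftrightarrow> ext_top phi = ext_top psi"
proof
  let ?s = "sup (d phi) (d psi)"
  assume "(phi, psi) \<in> sigma_rel d comb e"
  then have "comb (comb phi (e ?s)) (e t) = comb (comb psi (e ?s)) (e t)"
    unfolding sigma_rel_def vac_ext_def by simp
  then show "ext_top phi = ext_top psi" unfolding ext_top_def by (simp add: comb_assoc)
next
  let ?s = "sup (d phi) (d psi)"
  assume "ext_top phi = ext_top psi"
  then have "marg (ext_top phi) ?s = marg (ext_top psi) ?s" by simp
  then show "(phi, psi) \<in> sigma_rel d comb e"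
    unfolding sigma_rel_def vac_ext_def using marg_ext_top[of phi ?s] marg_ext_top[of psi ?s] by simp
qed

abbreviation cls where "cls \<equiv> sigma_class d comb e"
abbreviation qcomb where "qcomb \<equiv> quot_comb d comb e"
abbreviation qfocus where "qfocus \<equiv> quot_focus d comb marg e"

lemma sigma_class_eq: "cls phi = {psi. ext_top psi = ext_top phi}"
  unfolding sigma_class_def using sigma_rel_iff_ext_top by auto

lemma sigma_class_eq_iff: "cls a = cls b \<longleftrightarrow> ext_top a = ext_top b"
  unfolding sigma_class_eq by auto

lemma quot_carrier_eq: "quot_carrier d comb e = range cls"
  unfolding quot_carrier_def quotient_def sigma_class_def by auto

lemma ext_top_some_sigma_class: "ext_top (SOME psi. psi \<in> cls a) = ext_top a"
proof -
  have "(SOME psi. psi \<in> cls a) \<in> cls a" by (rule someI[of _ a]) (simp add: sigma_class_eq)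
  then show ?thesis unfolding sigma_class_eq by simp
qed

lemma quot_comb_sigma_class: "qcomb (cls a) (cls b) = cls (comb a b)"
  unfolding quot_comb_def sigma_class_eq_iff ext_top_comb ext_top_some_sigma_class ..

lemma quot_focus_sigma_class: "qfocus (cls a) x = cls (marg (ext_top a) x)"
proof -
  define r where "r = (SOME psi. psi \<in> cls a)"
  have "ext_top r = ext_top a" unfolding r_def by (rule ext_top_some_sigma_class)
  moreover have "marg (vac_ext comb e r (sup x (d r))) x = marg (ext_top r) x"
    using marg_ext_top[of r "sup x (d r)"] marg_marg[of x "sup x (d r)" "ext_top r"] le_top
    unfolding vac_ext_def by simp
  ultimately show ?thesis unfolding quot_focus_def Let_def r_def[symmetric] by simp
qed

lemma sigma_class_neutral: "cls (e z) = cls (e t)"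
  unfolding sigma_class_eq_iff ext_top_def by simp

lemma quot_focus_focus: "qfocus (qfocus (cls a) x) y = qfocus (cls a) (inf x y)"
proof -
  let ?m = "marg (ext_top a) x"
  have "d ?m = x" using label_marg le_top by simp
  then have "ext_top (marg (ext_top ?m) y) = ext_top (marg ?m (inf x y))"
    using ext_top_marg_ext_top[of ?m y] by simp
  also have "\<dots> = ext_top (marg (ext_top a) (inf x y))"
    using marg_marg[of "inf x y" x "ext_top a"] le_top by simp
  finally show ?thesis unfolding quot_focus_sigma_class sigma_class_eq_iff .
qed

lemma quot_focus_comb_focus:
  "qfocus (qcomb (qfocus (cls a) x) (cls b)) x = qcomb (qfocus (cls a) x) (qfocus (cls b) x)"
proof -
  let ?m = "marg (ext_top a) x"
  have label_m: "d ?m = x" using label_marg le_top by simp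
  have "ext_top (comb ?m b) = comb ?m (ext_top b)" unfolding ext_top_def by (simp add: comb_assoc)
  then have "marg (ext_top (comb ?m b)) x = comb ?m (marg (ext_top b) x)"
    using marg_comb[OF label_m, of "ext_top b" t] le_top by (simp add: inf_absorb1)
  then show ?thesis unfolding quot_focus_sigma_class quot_comb_sigma_class by simp
qed

lemma quot_focus_top: "qfocus (cls a) t = cls a"
  unfolding quot_focus_sigma_class sigma_class_eq_iff using marg_label[of "ext_top a"]
  by (simp add: ext_top_label_top)

lemma quot_comb_focus_idem: "qcomb (cls a) (qfocus (cls a) x) = cls a"
proof -
  have "ext_top (comb a (marg (ext_top a) x)) = comb (ext_top a) (marg (ext_top a) x)"
    unfolding ext_top_def by (simp add: comb_assoc comb_commute[of _ "e t"])
  also have "\<dots> = ext_top a" using comb_marg_idem[of x "ext_top a"] le_top by simp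
  finally show ?thesis unfolding quot_focus_sigma_class quot_comb_sigma_class sigma_class_eq_iff .
qed

lemma quot_domain_free_info_algebra:
  "domain_free_info_algebra (range cls) qcomb qfocus (cls (e z))"
proof -
  have ball_range: "(\<forall>A\<in>range cls. P A) \<longleftrightarrow> (\<forall>a. P (cls a))" for P by blast
  show ?thesis
    unfolding domain_free_info_algebra_def ball_range
  proof (intro conjI allI)
    fix a b c x y
    show "qcomb (cls a) (cls b) \<in> range cls" "qfocus (cls a) x \<in> range cls" "cls (e z) \<in> range cls"
      unfolding quot_comb_sigma_class quot_focus_sigma_class by blast+
    show "qcomb (qcomb (cls a) (cls b)) (cls c) = qcomb (cls a) (qcomb (cls b) (cls c))"
      "qcomb (cls a) (cls b) = qcomb (cls b) (cls a)"
      unfolding quot_comb_sigma_class by (simp_all add: comb_assoc comb_commute comb_left_commute)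
    show "qcomb (cls (e z)) (cls a) = cls a"
      unfolding quot_comb_sigma_class sigma_class_eq_iff ext_top_neutral_comb ..
    show "\<exists>x. qfocus (cls a) x = cls a" using quot_focus_top by blast
  qed (simp_all add: quot_focus_focus quot_focus_comb_focus quot_comb_focus_idem)
qed

lemma image_sigma_class_top: "cls ` label_set d t = range cls"
proof -
  have "cls a \<in> cls ` label_set d t" for a
  proof
    show "cls a = cls (ext_top a)" unfolding sigma_class_eq_iff by (simp add: ext_top_label_top)
  qed (simp add: label_set_def)
  then show ?thesis by blast
qed

lemma info_le_sigma_class:
  "a \<in> label_set d t \<Longrightarrow> b \<in> label_set d t \<Longrightarrow> info_le qcomb (cls a) (cls b) \<longleftrightarrow> info_le comb a b"
  unfolding info_le_def quot_comb_sigma_class sigma_class_eq_iff label_set_def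
  using ext_top_label_top[of "comb a b"] ext_top_label_top[of b] by simp

lemma sigma_class_top_order_iso: "info_order_iso cls (label_set d t) (range cls) comb qcomb"
  using image_sigma_class_top info_le_sigma_class by unfold_locales

lemma quot_domain_free_continuous:
  assumes G: "G \<subseteq> label_set d t" and comb_closed: "\<forall>a\<in>G. \<forall>b\<in>G. comb a b \<in> G"
    and neutral: "e t \<in> G"
    and directed_sup: "\<forall>X. X \<subseteq> G \<longrightarrow> directed_set comb X \<longrightarrow> (\<exists>s. is_sup_in comb (label_set d t) X s)"
    and approx: "\<forall>phi\<in>label_set d t.
      is_sup_in comb (label_set d t) {psi \<in> G. way_below_in comb (label_set d t) psi phi} phi"
  shows "domain_free_continuous (quot_carrier d comb e) qcomb qfocus (cls (e z))"
  unfolding domain_free_continuous_def quot_carrier_eq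
proof (intro conjI exI[of _ t] exI[of _ "cls ` G"] allI impI ballI)
  interpret iso: info_order_iso cls "label_set d t" "range cls" comb qcomb
    by (rule sigma_class_top_order_iso)
  show "domain_free_info_algebra (range cls) qcomb qfocus (cls (e z))"
    by (rule quot_domain_free_info_algebra)
  show "x \<le> t" for x by (rule le_top)
  show "cls ` G \<subseteq> range cls" by blast
  show "qcomb A B \<in> cls ` G" if AB: "A \<in> cls ` G" "B \<in> cls ` G" for A B
  proof -
    obtain a b where "a \<in> G" "b \<in> G" "A = cls a" "B = cls b" using AB by blast
    then have "qcomb A B = cls (comb a b)" and "comb a b \<in> G"
      using comb_closed by (simp_all add: quot_comb_sigma_class)
    then show ?thesis by blast
  qed
  show "cls (e z) \<in> cls ` G" unfolding sigma_class_neutral[of z] using neutral by (rule imageI)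
  show "\<exists>S. is_sup_in qcomb (range cls) X S" if "X \<subseteq> cls ` G" "directed_set qcomb X" for X
    by (rule iso.continuous_basis_image(1)[OF G directed_sup[rule_format] approx[rule_format] that])
  show "is_sup_in qcomb (range cls) {h \<in> cls ` G. way_below_in qcomb (range cls) h A} A"
    if "A \<in> range cls" for A
    by (rule iso.continuous_basis_image(2)[OF G directed_sup[rule_format] approx[rule_format] that])
qed

end

theorem theorem4p10:
  fixes d :: "'phi \<Rightarrow> 'd::lattice"
    and comb :: "'phi \<Rightarrow> 'phi \<Rightarrow> 'phi"
    and marg :: "'phi \<Rightarrow> 'd \<Rightarrow> 'phi"
    and e :: "'d \<Rightarrow> 'phi"
  assumes "labeled_continuous d comb marg e"
  shows "\<forall>z. domain_free_continuous (quot_carrier d comb e) (quot_comb d comb e)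
            (quot_focus d comb marg e) (sigma_class d comb e (e z))"
proof
  fix z
  obtain t :: 'd and \<Gamma> where algebra: "labeled_info_algebra d comb marg e"
    and top: "\<forall>x. x \<le> t"
    and basis: "\<forall>x. \<Gamma> x \<subseteq> label_set d x \<and> (\<forall>a\<in>\<Gamma> x. \<forall>b\<in>\<Gamma> x. comb a b \<in> \<Gamma> x) \<and>
        e x \<in> \<Gamma> x \<and>
        (\<forall>X. X \<subseteq> \<Gamma> x \<longrightarrow> directed_set comb X \<longrightarrow> (\<exists>s. is_sup_in comb (label_set d x) X s)) \<and>
        (\<forall>phi\<in>label_set d x. is_sup_in comb (label_set d x)
           {psi \<in> \<Gamma> x. way_below_in comb (label_set d x) psi phi} phi)"
    using assms unfolding labeled_continuous_def by (elim conjE exE)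
  interpret labeled_info_algebra_with_top d comb marg e t
    using algebra top by unfold_locales blast+
  show "domain_free_continuous (quot_carrier d comb e) (quot_comb d comb e)
      (quot_focus d comb marg e) (sigma_class d comb e (e z))"
    using basis[rule_format, of t] by (elim conjE) (rule quot_domain_free_continuous)
qed

end
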